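(* Let $\epsilon>0$, $T\in\mathbb{N}$, and $B\ge T$, and define $k=5\lfloor B/T\rfloor+5$. Then there exists an instance of the UVP problem (with total budget $B$, maximum per-configuration budget $T$, smoothness parameter $\epsilon$) satisfying the concavity assumption, with $k$ clusters each of radius $r_k>0$, such that no algorithm can achieve an approximation factor exceeding $(1-\epsilon r_k)$, where $r_k$ is the optimal clustering radius for $k$ clusters.
   Context: UVP problem: $A:\mathbb{R}^d\times[T]\to[0,1]$ is unknown ($[T]=\{1,\dots,T\}$); a finite $\mathcal{X}\subset\mathbb{R}^d$ is known; goal $\max_{b_1,\dots,b_n}\max_iA(\mathbf{x}_i,b_i)$ subject to $\sum_ib_i\le B$; obtaining $A(\mathbf{x},b)$ requires evaluating $A(\mathbf{x},1),\dots,A(\mathbf{x},b)$ in sequence, costing $b$ units. Instances satisfy Assumption 1 (monotonicity): $b_1\le b_2\Rightarrow A(\mathbf{x},b_1)\le A(\mathbf{x},b_2)$, and Assumption 2 (smoothness): for all $\mathbf{x}_i,\mathbf{x}_j\in\mathcal{X}$, $\min_{b\in[T]}A(\mathbf{x}_i,b)/A(\mathbf{x}_j,b)\ge1-\epsilon\|\mathbf{x}_i-\mathbf{x}_j\|_2$ (ratio $=1$ if both are $0$, $+\infty$ if only the denominator is $0$). Concavity assumption: for all $\mathbf{x}\in\mathcal{X}$ and $b\in\{2,\dots,T-1\}$, $A(\mathbf{x},b+1)-A(\mathbf{x},b)\le A(\mathbf{x},b)-A(\mathbf{x},b-1)$. The optimal clustering radius for $m$ clusters is $\min_{\mathcal{C}\subseteq\mathcal{X},|\mathcal{C}|=m}\max_{\mathbf{x}\in\mathcal{X}}\min_{\mathbf{c}\in\mathcal{C}}\|\mathbf{x}-\mathbf{c}\|_2$.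 An algorithm (possibly randomized) adaptively evaluates values within budget $B$ and outputs $\mathbf{x}^{Alg}$; it achieves approximation factor $\alpha$ on an instance if $\mathbb{E}[A(\mathbf{x}^{Alg},T)]\ge\alpha\max_{\mathbf{x}\in\mathcal{X}}A(\mathbf{x},T)$. *)

theory Defs
  imports "HOL-Probability.Probability"
begin

text \<open>Points of R^d are represented as real lists of length d.\<close>
type_synonym point = "real list"

definition l2dist :: "point \<Rightarrow> point \<Rightarrow> real" where
  "l2dist x y = sqrt (\<Sum>i<length x. (x ! i - y ! i)^2)"

definition opt_radius :: "point set \<Rightarrow> nat \<Rightarrow> real" where
  "opt_radius X m = (MIN C\<in>{C. C \<subseteq> X \<and> card C = m}. MAX x\<in>X. MIN c\<in>C. l2dist x c)"

definition ratio :: "real \<Rightarrow> real \<Rightarrow> ereal" where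
  "ratio a c = (if c = 0 then (if a = 0 then 1 else PInfty) else ereal (a / c))"

definition uvp_instance :: "point set \<Rightarrow> nat \<Rightarrow> real \<Rightarrow> (point \<Rightarrow> nat \<Rightarrow> real) \<Rightarrow> bool" where
  "uvp_instance X T eps A \<longleftrightarrow>
     (\<forall>x\<in>X. \<forall>b\<in>{1..T}. 0 \<le> A x b \<and> A x b \<le> 1) \<and>
     (\<forall>x\<in>X. \<forall>b1\<in>{1..T}. \<forall>b2\<in>{1..T}. b1 \<le> b2 \<longrightarrow> A x b1 \<le> A x b2) \<and>
     (\<forall>xi\<in>X. \<forall>xj\<in>X. \<forall>b\<in>{1..T}. ratio (A xi b) (A xj b) \<ge> ereal (1 - eps * l2dist xi xj))"

definition concave_instance :: "point set \<Rightarrow> nat \<Rightarrow> (point \<Rightarrow> nat \<Rightarrow> real) \<Rightarrow> bool" where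
  "concave_instance X T A \<longleftrightarrow>
     (\<forall>x\<in>X. \<forall>b\<in>{2..T-1}. A x (b+1) - A x b \<le> A x b - A x (b-1))"

text \<open>Algorithms: an adaptive randomized policy mapping the history of observations
  (queried point, observed value) to a distribution over actions.  Querying x observes
  the next value A(x, b+1), where b is the number of earlier queries of x (cost 1 each).\<close>
datatype action = Query point | Output point

type_synonym history = "(point \<times> real) list"
type_synonym policy = "history \<Rightarrow> action pmf"

definition level :: "history \<Rightarrow> point \<Rightarrow> nat" where
  "level h x = length (filter (\<lambda>q. fst q = x) h)"

definition valid_policy :: "point set \<Rightarrow> nat \<Rightarrow> nat \<Rightarrow> policy \<Rightarrow> bool" where
  "valid_policy X T B pol \<longleftrightarrow>
     (\<forall>h. \<forall>a\<in>set_pmf (pol h). case a of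
        Output x \<Rightarrow> x \<in> X
      | Query x \<Rightarrow> x \<in> X \<and> level h x < T \<and> length h < B)"

fun run :: "policy \<Rightarrow> (point \<Rightarrow> nat \<Rightarrow> real) \<Rightarrow> nat \<Rightarrow> history \<Rightarrow> point pmf" where
  "run pol A 0 h = bind_pmf (pol h) (\<lambda>a. case a of Output x \<Rightarrow> return_pmf x | Query x \<Rightarrow> return_pmf x)"
| "run pol A (Suc n) h = bind_pmf (pol h) (\<lambda>a. case a of
      Output x \<Rightarrow> return_pmf x
    | Query x \<Rightarrow> run pol A n (h @ [(x, A x (level h x + 1))]))"

text \<open>Output distribution of the algorithm with budget B (at most B queries, then output).\<close>
definition alg_output :: "nat \<Rightarrow> policy \<Rightarrow> (point \<Rightarrow> nat \<Rightarrow> real) \<Rightarrow> point pmf" where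
  "alg_output B pol A = run pol A (Suc B) []"

end

(*
  Put u = 1 / (eps T) and place k + 1 points on a line: j u for j < k, and -u/2. The k centres
  j u cover all points within u/2, so r_k <= u/2, while each inner point j u (0 < j < k) is at
  distance at least u from every other point.

  On the plateau instance every point has curve min(b, T-1)/T; the instance peaked at an inner
  point s gives s the curve b/T instead. Smoothness holds because s is u-isolated, and the two
  instances differ only at (s, T), so an algorithm can tell them apart only by querying s for
  the T-th time ("exposing" s) or by outputting s. A potential argument (remaining budget plus
  the levels of unexposed points, divided by T) shows that on the plateau instance the expected
  number of points that are exposed or output is at most 1 + B/T. As there are k - 1 >= 2 (1 + B/T)
  inner points, some s is found with probability at most 1/2 on the instance peaked at s, and
  then the expected value of the output is at most 1 - 1/(2T) = 1 - eps u/2 <= 1 - eps r_k.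
*)

theory Submission
  imports Defs
begin

lemma integrable_pmf_kernel: "integrable (measure_pmf p) (\<lambda>a. pmf (K a) x)"
  by (intro measure_pmf.integrable_const_bound[where B = 1]) (auto simp: pmf_le_1)

lemma sum_pmf_le_1: "finite S \<Longrightarrow> (\<Sum>x\<in>S. pmf p x) \<le> 1"
  using measure_measure_pmf_finite measure_pmf.prob_le_1 by metis

lemma level_snoc: "level (h @ [(y, v)]) x = level h x + (if y = x then 1 else 0)"
  by (simp add: level_def)

fun run_exposing ::
  "policy \<Rightarrow> (point \<Rightarrow> nat \<Rightarrow> real) \<Rightarrow> nat \<Rightarrow> point \<Rightarrow> nat \<Rightarrow> history \<Rightarrow> point pmf" where
  "run_exposing pol A L x 0 h = run pol A 0 h"
| "run_exposing pol A L x (Suc n) h = bind_pmf (pol h) (\<lambda>a. case a of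
      Output y \<Rightarrow> return_pmf y
    | Query y \<Rightarrow> if y = x \<and> L \<le> level h y then return_pmf x
                 else run_exposing pol A L x n (h @ [(y, A y (level h y + 1))]))"

lemma pmf_run_le_pmf_run_exposing:
  assumes agree: "\<And>y b. y \<noteq> x \<or> b \<le> L \<Longrightarrow> A' y b = A y b"
  shows "pmf (run pol A' n h) x \<le> pmf (run_exposing pol A L x n h) x"
proof (induction n arbitrary: h)
  case 0
  show ?case by simp
next
  case (Suc n)
  have agree_step: "A' y (Suc (level h y)) = A y (Suc (level h y))" if "\<not> (y = x \<and> L \<le> level h y)" for y
    using that by (intro agree) auto
  show ?case
    unfolding run.simps run_exposing.simps pmf_bind
    by (intro integral_mono' integrable_pmf_kernel)
       (auto split: action.split simp: pmf_le_1 agree_step Suc.IH)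
qed

definition unexposed :: "point set \<Rightarrow> nat \<Rightarrow> history \<Rightarrow> point set" where
  "unexposed X L h = {x \<in> X. level h x \<le> L}"

text \<open>No query raises the potential and a query exposing a point lowers it by 1, so one plus
  the potential bounds the expected number of points still to be exposed or output.\<close>

definition exposure_potential :: "point set \<Rightarrow> nat \<Rightarrow> nat \<Rightarrow> history \<Rightarrow> real" where
  "exposure_potential X B L h =
     (real B - real (length h) + (\<Sum>x\<in>unexposed X L h. real (level h x))) / (real L + 1)"

lemma finite_unexposed: "finite X \<Longrightarrow> finite (unexposed X L h)"
  by (simp add: unexposed_def)

lemma exposure_potential_nonneg: "length h \<le> B \<Longrightarrow> 0 \<le> exposure_potential X B L h"
  unfolding exposure_potential_def by (intro divide_nonneg_pos add_nonneg_nonneg sum_nonneg) auto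

lemma unexposed_snoc:
  "unexposed X L (h @ [(y, v)]) = (if level h y = L then unexposed X L h - {y} else unexposed X L h)"
  by (auto simp: unexposed_def level_snoc)

lemma sum_level_unexposed_snoc:
  assumes "finite X" and "y \<in> X"
  shows "(\<Sum>x\<in>unexposed X L (h @ [(y, v)]). real (level (h @ [(y, v)]) x))
           + (if level h y = L then real L + 1 else 0)
         \<le> (\<Sum>x\<in>unexposed X L h. real (level h x)) + 1"
proof -
  define U where "U = unexposed X L h"
  define h' where "h' = h @ [(y, v)]"
  have fin: "finite U" using finite_unexposed[OF assms(1)] by (simp add: U_def)
  consider "level h y < L" | "level h y = L" | "level h y > L" by linarith
  then show ?thesis
  proof cases
    case 1
    then have "y \<in> U" using assms(2) by (simp add: U_def unexposed_def)
    have "(\<Sum>x\<in>U. real (level h' x)) = (\<Sum>x\<in>U. real (level h x) + (if y = x then 1 else 0))"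
      by (intro sum.cong) (auto simp: h'_def level_snoc)
    also have "\<dots> = (\<Sum>x\<in>U. real (level h x)) + 1"
      using fin \<open>y \<in> U\<close> by (simp add: sum.distrib)
    finally show ?thesis using 1 by (simp add: h'_def unexposed_snoc U_def)
  next
    case 2
    then have "y \<in> U" using assms(2) by (simp add: U_def unexposed_def)
    have "(\<Sum>x\<in>U - {y}. real (level h' x)) = (\<Sum>x\<in>U - {y}. real (level h x))"
      by (intro sum.cong) (auto simp: h'_def level_snoc)
    also have "\<dots> = (\<Sum>x\<in>U. real (level h x)) - real L"
      using fin \<open>y \<in> U\<close> 2 by (simp add: sum_diff1)
    finally show ?thesis using 2 by (simp add: h'_def unexposed_snoc U_def)
  next
    case 3
    then have "y \<notin> U" by (simp add: U_def unexposed_def)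
    then have "(\<Sum>x\<in>U. real (level h' x)) = (\<Sum>x\<in>U. real (level h x))"
      by (intro sum.cong) (auto simp: h'_def level_snoc)
    then show ?thesis using 3 by (simp add: h'_def unexposed_snoc U_def)
  qed
qed

lemma exposure_potential_snoc:
  assumes "finite X" and "y \<in> X"
  shows "exposure_potential X B L (h @ [(y, v)]) + (if level h y = L then 1 else 0)
           \<le> exposure_potential X B L h"
proof -
  have "real B - real (length (h @ [(y, v)]))
          + (\<Sum>x\<in>unexposed X L (h @ [(y, v)]). real (level (h @ [(y, v)]) x))
          + (if level h y = L then real L + 1 else 0)
        \<le> real B - real (length h) + (\<Sum>x\<in>unexposed X L h. real (level h x))"
    using sum_level_unexposed_snoc[OF assms, where L = L and h = h and v = v] by simp
  then show ?thesis
    unfolding exposure_potential_def by (simp add: divide_simps split: if_split_asm)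
qed

lemma sum_unexposed_query:
  assumes "finite X" and "y \<in> X"
  shows "(\<Sum>x\<in>unexposed X L h. if x = y \<and> L \<le> level h y then 1 else f x)
           = (if level h y = L then 1 else 0) + (\<Sum>x\<in>unexposed X L (h @ [(y, v)]). f x)"
proof (cases "level h y = L")
  case True
  then have "y \<in> unexposed X L h" using assms(2) by (simp add: unexposed_def)
  then show ?thesis
    using True finite_unexposed[OF assms(1)] by (simp add: sum.remove unexposed_snoc)
next
  case False
  then have "(\<Sum>x\<in>unexposed X L h. if x = y \<and> L \<le> level h y then 1 else f x)
      = (\<Sum>x\<in>unexposed X L h. f x)"
    by (intro sum.cong) (auto simp: unexposed_def)
  then show ?thesis using False by (simp add: unexposed_snoc)
qed

lemma sum_pmf_run_exposing_le:
  assumes fin: "finite X" and valid: "valid_policy X T B pol"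
  shows "length h \<le> B \<Longrightarrow>
    (\<Sum>x\<in>unexposed X L h. pmf (run_exposing pol A L x n h) x) \<le> 1 + exposure_potential X B L h"
proof (induction n arbitrary: h)
  case 0
  show ?case
    using sum_pmf_le_1[OF finite_unexposed[OF fin, of L h], of "run pol A 0 h"]
      exposure_potential_nonneg[OF "0.prems", of X L]
    unfolding run_exposing.simps(1) by linarith
next
  case (Suc n)
  define U where "U = unexposed X L h"
  have "finite U" using finite_unexposed[OF fin] by (simp add: U_def)
  define K where "K x a = (case a of
      Output y \<Rightarrow> return_pmf y
    | Query y \<Rightarrow> if y = x \<and> L \<le> level h y then return_pmf x
                 else run_exposing pol A L x n (h @ [(y, A y (level h y + 1))]))" for x a
  have step: "(\<Sum>x\<in>U. pmf (K x a) x) \<le> 1 + exposure_potential X B L h"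
    if "a \<in> set_pmf (pol h)" for a
  proof (cases a)
    case (Output y)
    then show ?thesis
      using sum_pmf_le_1[OF \<open>finite U\<close>, of "return_pmf y"] exposure_potential_nonneg[OF Suc.prems, of X L]
      by (simp add: K_def)
  next
    case (Query y)
    have "y \<in> X" and "length h < B"
      using valid that Query unfolding valid_policy_def by fastforce+
    define h' where "h' = h @ [(y, A y (level h y + 1))]"
    have "(\<Sum>x\<in>U. pmf (K x a) x)
        = (\<Sum>x\<in>U. if x = y \<and> L \<le> level h y then 1 else pmf (run_exposing pol A L x n h') x)"
      by (intro sum.cong) (auto simp: K_def Query h'_def)
    also have "\<dots> = (if level h y = L then 1 else 0)
        + (\<Sum>x\<in>unexposed X L h'. pmf (run_exposing pol A L x n h') x)"
      unfolding U_def h'_def by (rule sum_unexposed_query[OF fin \<open>y \<in> X\<close>])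
    also have "\<dots> \<le> (if level h y = L then 1 else 0) + 1 + exposure_potential X B L h'"
      using Suc.IH[of h'] \<open>length h < B\<close> by (simp add: h'_def)
    also have "\<dots> \<le> 1 + exposure_potential X B L h"
      using exposure_potential_snoc[OF fin \<open>y \<in> X\<close>, of B L h "A y (level h y + 1)"] unfolding h'_def by linarith
    finally show ?thesis .
  qed
  have "(\<Sum>x\<in>U. pmf (run_exposing pol A L x (Suc n) h) x)
      = measure_pmf.expectation (pol h) (\<lambda>a. \<Sum>x\<in>U. pmf (K x a) x)"
    by (simp add: K_def pmf_bind integral_sum integrable_pmf_kernel)
  also have "\<dots> \<le> 1 + exposure_potential X B L h"
    by (intro measure_pmf.integral_le_const Bochner_Integration.integrable_sum integrable_pmf_kernel AE_pmfI step)
  finally show ?case unfolding U_def .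
qed

definition plateau_instance :: "nat \<Rightarrow> point \<Rightarrow> nat \<Rightarrow> real" where
  "plateau_instance T x b = real (min b (T - 1)) / real T"

definition peaked_instance :: "nat \<Rightarrow> point \<Rightarrow> point \<Rightarrow> nat \<Rightarrow> real" where
  "peaked_instance T s x b = real (if x = s then b else min b (T - 1)) / real T"

lemma ex_hidden_peak:
  assumes "T \<ge> 1" and fin: "finite X" and valid: "valid_policy X T B pol"
    and "S \<subseteq> X" and card_S: "1 + real B / real T \<le> real (card S) / 2"
  shows "\<exists>s\<in>S. pmf (alg_output B pol (peaked_instance T s)) s \<le> 1 / 2"
proof (rule ccontr)
  assume "\<not> ?thesis"
  then have found: "1 / 2 < pmf (alg_output B pol (peaked_instance T s)) s" if "s \<in> S" for s
    using that by force
  define H where "H x = pmf (run_exposing pol (plateau_instance T) (T - 1) x (Suc B) []) x" for x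
  have exposing: "pmf (alg_output B pol (peaked_instance T s)) s \<le> H s" for s
    unfolding alg_output_def H_def
    by (rule pmf_run_le_pmf_run_exposing) (auto simp: peaked_instance_def plateau_instance_def)
  have H_large: "1 / 2 < H s" if "s \<in> S" for s
    using found[OF that] exposing[of s] by linarith
  have finS: "finite S" using \<open>S \<subseteq> X\<close> fin by (rule finite_subset)
  have "S \<noteq> {}" using card_S \<open>T \<ge> 1\<close> by (auto simp: field_simps)
  have "real (card S) / 2 = (\<Sum>s\<in>S. 1 / 2)" by simp
  also have "\<dots> < (\<Sum>s\<in>S. H s)"
    using finS \<open>S \<noteq> {}\<close> H_large by (intro sum_strict_mono) auto
  also have "\<dots> \<le> (\<Sum>x\<in>X. H x)"
    using fin \<open>S \<subseteq> X\<close> by (intro sum_mono2) (auto simp: H_def)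
  also have "\<dots> \<le> 1 + real B / real T"
  proof -
    have "(\<Sum>x\<in>unexposed X (T - 1) []. H x) \<le> 1 + exposure_potential X B (T - 1) []"
      unfolding H_def by (rule sum_pmf_run_exposing_le[OF fin valid]) simp
    moreover have "unexposed X (T - 1) [] = X" by (simp add: unexposed_def level_def)
    moreover have "exposure_potential X B (T - 1) [] = real B / real T"
      using \<open>T \<ge> 1\<close> by (simp add: exposure_potential_def level_def of_nat_diff)
    ultimately show ?thesis by simp
  qed
  finally show False using card_S by linarith
qed

lemma l2dist_nonneg: "0 \<le> l2dist x y"
  by (simp add: l2dist_def sum_nonneg)

lemma ratio_ge_1: "0 \<le> c \<Longrightarrow> c \<le> a \<Longrightarrow> 1 \<le> ratio a c"
  by (auto simp: ratio_def)

lemma uvp_instance_peaked: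
  assumes "eps > 0" and "T \<ge> 1"
    and isolated: "\<And>y. y \<in> X \<Longrightarrow> y \<noteq> s \<Longrightarrow> 1 / (eps * real T) \<le> l2dist y s"
  shows "uvp_instance X T eps (peaked_instance T s)"
  unfolding uvp_instance_def
proof (intro conjI ballI impI)
  fix x b assume "b \<in> {1..T}"
  then show "0 \<le> peaked_instance T s x b" and "peaked_instance T s x b \<le> 1"
    by (auto simp: peaked_instance_def)
next
  fix x and b1 b2 :: nat assume "b1 \<le> b2"
  then show "peaked_instance T s x b1 \<le> peaked_instance T s x b2"
    by (auto simp: peaked_instance_def divide_right_mono)
next
  fix xi xj b assume "xi \<in> X" and b: "b \<in> {1..T}"
  show "ereal (1 - eps * l2dist xi xj) \<le> ratio (peaked_instance T s xi b) (peaked_instance T s xj b)"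
  proof (cases "xj = s \<and> xi \<noteq> s")
    case True
    have "1 / real T = eps * (1 / (eps * real T))" using \<open>eps > 0\<close> by simp
    also have "\<dots> \<le> eps * l2dist xi xj"
      using isolated[OF \<open>xi \<in> X\<close>] True \<open>eps > 0\<close> by (intro mult_left_mono) auto
    finally have "1 - eps * l2dist xi xj \<le> 1 - 1 / real T" by simp
    also have "\<dots> \<le> real (min b (T - 1)) / real b"
    proof (cases "b = T")
      case True
      then show ?thesis using \<open>T \<ge> 1\<close> by (simp add: of_nat_diff diff_divide_distrib)
    next
      case False
      then have "min b (T - 1) = b" using b by auto
      then show ?thesis using b by simp
    qed
    also have "\<dots> = peaked_instance T s xi b / peaked_instance T s xj b"
      using True b by (simp add: peaked_instance_def)
    finally show ?thesis
      using True b by (simp add: peaked_instance_def ratio_def)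
  next
    case False
    have "ereal (1 - eps * l2dist xi xj) \<le> 1"
      using \<open>eps > 0\<close> l2dist_nonneg[of xi xj] by simp
    also have "1 \<le> ratio (peaked_instance T s xi b) (peaked_instance T s xj b)"
      using False by (intro ratio_ge_1) (auto simp: peaked_instance_def divide_right_mono)
    finally show ?thesis .
  qed
qed

lemma concave_instance_peaked: "concave_instance X T (peaked_instance T s)"
  unfolding concave_instance_def
proof (intro ballI)
  fix x b assume b: "b \<in> {2..T - 1}"
  define g where "g c = real (if x = s then c else min c (T - 1))" for c
  have "g (b + 1) - g b \<le> g b - g (b - 1)"
    using b by (auto simp: g_def of_nat_diff)
  then have "(g (b + 1) - g b) / real T \<le> (g b - g (b - 1)) / real T"
    by (rule divide_right_mono) simp
  then show "peaked_instance T s x (b + 1) - peaked_instance T s x b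
      \<le> peaked_instance T s x b - peaked_instance T s x (b - 1)"
    by (simp add: peaked_instance_def g_def diff_divide_distrib)
qed

lemma expectation_peaked:
  assumes "T \<ge> 1"
  shows "measure_pmf.expectation p (\<lambda>x. peaked_instance T s x T) = 1 - (1 - pmf p s) / real T"
proof -
  have "peaked_instance T s x T = 1 - (1 - indicator {s} x) / real T" for x
    using assms by (auto simp: peaked_instance_def of_nat_diff field_simps)
  then show ?thesis
    by (simp add: Bochner_Integration.integral_diff measure_pmf_single less_top[symmetric])
qed

lemma Max_peaked:
  assumes "finite X" and "s \<in> X" and "T \<ge> 1"
  shows "(MAX x\<in>X. peaked_instance T s x T) = 1"
  using assms by (intro Max_eqI) (auto simp: peaked_instance_def)

lemma exists_hard_instance:
  assumes "eps > 0" and "T \<ge> 1" and "finite X" and "valid_policy X T B pol" and "S \<subseteq> X"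
    and "1 + real B / real T \<le> real (card S) / 2"
    and isolated: "\<And>s y. s \<in> S \<Longrightarrow> y \<in> X \<Longrightarrow> y \<noteq> s \<Longrightarrow> 1 / (eps * real T) \<le> l2dist y s"
  shows "\<exists>A. uvp_instance X T eps A \<and> concave_instance X T A \<and>
           measure_pmf.expectation (alg_output B pol A) (\<lambda>x. A x T) \<le> 1 - 1 / (2 * real T) \<and>
           (MAX x\<in>X. A x T) = 1"
proof -
  obtain s where "s \<in> S" and found: "pmf (alg_output B pol (peaked_instance T s)) s \<le> 1 / 2"
    using ex_hidden_peak[OF assms(2-6)] by blast
  have "1 / (2 * real T) \<le> (1 - pmf (alg_output B pol (peaked_instance T s)) s) / real T"
    using found \<open>T \<ge> 1\<close> by (simp add: field_simps)
  then have "measure_pmf.expectation (alg_output B pol (peaked_instance T s)) (\<lambda>x. peaked_instance T s x T)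
      \<le> 1 - 1 / (2 * real T)"
    using expectation_peaked[OF \<open>T \<ge> 1\<close>] by simp
  moreover have "s \<in> X" using \<open>s \<in> S\<close> \<open>S \<subseteq> X\<close> by blast
  ultimately show ?thesis
    using uvp_instance_peaked[OF \<open>eps > 0\<close> \<open>T \<ge> 1\<close> isolated[OF \<open>s \<in> S\<close>]]
      concave_instance_peaked Max_peaked[OF \<open>finite X\<close> _ \<open>T \<ge> 1\<close>] by blast
qed

lemma real_divide_less_div_plus_1: "real m / real n < real (m div n) + 1"
  using real_of_int_floor_add_one_gt[of "real m / real n"] by (simp add: floor_divide_of_nat_eq)

lemma l2dist_singleton: "l2dist [a] [b] = \<bar>a - b\<bar>"
  by (simp add: l2dist_def)

lemma opt_radius_le:
  assumes "finite X" and "X \<noteq> {}" and "C \<subseteq> X" and "card C = m"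
    and cover: "\<And>x. x \<in> X \<Longrightarrow> \<exists>c\<in>C. l2dist x c \<le> r"
  shows "opt_radius X m \<le> r"
proof -
  have "finite C" using assms(1,3) by (rule finite_subset[rotated])
  have "C \<noteq> {}" using cover \<open>X \<noteq> {}\<close> by blast
  have "finite {C. C \<subseteq> X \<and> card C = m}" using \<open>finite X\<close> by (simp add: finite_subset[of _ "Pow X"])
  then have "opt_radius X m \<le> (MAX x\<in>X. MIN c\<in>C. l2dist x c)"
    unfolding opt_radius_def using assms(3,4) by (intro Min_le) auto
  also have "\<dots> \<le> r"
    using \<open>finite X\<close> \<open>X \<noteq> {}\<close> \<open>finite C\<close> \<open>C \<noteq> {}\<close> cover by (auto simp: Min_le_iff)
  finally show ?thesis .
qed

lemma opt_radius_pos: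
  assumes "finite X" and "0 < m" and "m < card X"
    and separated: "\<And>x y. x \<in> X \<Longrightarrow> y \<in> X \<Longrightarrow> x \<noteq> y \<Longrightarrow> 0 < l2dist x y"
  shows "0 < opt_radius X m"
proof -
  define \<C> where "\<C> = {C. C \<subseteq> X \<and> card C = m}"
  have "finite \<C>" using \<open>finite X\<close> by (simp add: \<C>_def finite_subset[of _ "Pow X"])
  have "\<C> \<noteq> {}"
    using obtain_subset_with_card_n[of m X] \<open>m < card X\<close> by (auto simp: \<C>_def)
  have "0 < (MAX x\<in>X. MIN c\<in>C. l2dist x c)" if "C \<in> \<C>" for C
  proof -
    have "C \<subseteq> X" and "card C = m" using that by (auto simp: \<C>_def)
    then have "finite C" and "C \<noteq> {}" using \<open>finite X\<close> \<open>0 < m\<close> finite_subset by auto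
    have "\<not> X \<subseteq> C"
      using card_mono[OF \<open>finite C\<close>] \<open>card C = m\<close> \<open>m < card X\<close> by (meson leD)
    then obtain x where "x \<in> X" and "x \<notin> C" by blast
    then have "0 < (MIN c\<in>C. l2dist x c)"
      using \<open>finite C\<close> \<open>C \<noteq> {}\<close> \<open>C \<subseteq> X\<close> by (auto simp: Min_gr_iff intro!: separated)
    also have "\<dots> \<le> (MAX x\<in>X. MIN c\<in>C. l2dist x c)"
      using \<open>finite X\<close> \<open>x \<in> X\<close> by (intro Max_ge) auto
    finally show ?thesis .
  qed
  then show ?thesis
    using \<open>finite \<C>\<close> \<open>\<C> \<noteq> {}\<close> by (simp add: opt_radius_def \<C>_def[symmetric] Min_gr_iff)
qed

definition line_config :: "real \<Rightarrow> nat \<Rightarrow> point set" where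
  "line_config u k = insert [- u / 2] ((\<lambda>j. [real j * u]) ` {..<k})"

lemma line_config_cases:
  assumes "x \<in> line_config u k"
  obtains "x = [- u / 2]" | j where "j < k" and "x = [real j * u]"
  using assms by (auto simp: line_config_def)

lemma line_config_singleton: "x \<in> line_config u k \<Longrightarrow> x = [hd x]"
  by (auto simp: line_config_def)

lemma card_line_config:
  assumes "0 < u"
  shows "card (line_config u k) = Suc k"
proof -
  have "- u / 2 \<noteq> real j * u" for j
  proof -
    have "0 \<le> real j * u" using \<open>0 < u\<close> by simp
    then show ?thesis using \<open>0 < u\<close> by linarith
  qed
  then have "[- u / 2] \<notin> (\<lambda>j. [real j * u]) ` {..<k}" by auto
  moreover have "inj_on (\<lambda>j. [real j * u]) {..<k}"
    using \<open>0 < u\<close> by (auto simp: inj_on_def)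
  ultimately show ?thesis by (simp add: line_config_def card_image)
qed

lemma line_config_separated:
  assumes "x \<in> line_config u k" and "y \<in> line_config u k" and "x \<noteq> y"
  shows "0 < l2dist x y"
proof -
  have "x = [hd x]" and "y = [hd y]" using assms(1,2) by (auto intro: line_config_singleton)
  then show ?thesis using \<open>x \<noteq> y\<close> by (metis l2dist_singleton zero_less_abs_iff right_minus_eq)
qed

definition inner_points :: "real \<Rightarrow> nat \<Rightarrow> point set" where
  "inner_points u k = (\<lambda>j. [real j * u]) ` {1..<k}"

lemma inner_points_subset: "inner_points u k \<subseteq> line_config u k"
  by (auto simp: inner_points_def line_config_def)

lemma card_inner_points: "0 < u \<Longrightarrow> card (inner_points u k) = k - 1"
  by (simp add: inner_points_def card_image inj_on_def)

lemma inner_points_isolated: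
  assumes "0 < u" and "s \<in> inner_points u k" and "y \<in> line_config u k" and "y \<noteq> s"
  shows "u \<le> l2dist y s"
proof -
  obtain j where "1 \<le> j" and s: "s = [real j * u]" using assms(2) by (auto simp: inner_points_def)
  show ?thesis
    using assms(3)
  proof (cases rule: line_config_cases)
    case 1
    have "u \<le> real j * u" using \<open>0 < u\<close> \<open>1 \<le> j\<close> by simp
    then show ?thesis using \<open>0 < u\<close> unfolding 1 s l2dist_singleton by linarith
  next
    case (2 i)
    then have "1 \<le> \<bar>real i - real j\<bar>" using \<open>y \<noteq> s\<close> s by auto
    then have "u \<le> \<bar>real i - real j\<bar> * u" using \<open>0 < u\<close> by simp
    then show ?thesis using \<open>0 < u\<close> 2 s by (simp add: l2dist_singleton abs_mult flip: left_diff_distrib)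
  qed
qed

lemma opt_radius_line_config:
  assumes "0 < u" and "1 \<le> k"
  shows "0 < opt_radius (line_config u k) k" and "opt_radius (line_config u k) k \<le> u / 2"
proof -
  have "finite (line_config u k)" by (simp add: line_config_def)
  then show "0 < opt_radius (line_config u k) k"
    using assms card_line_config line_config_separated by (intro opt_radius_pos) auto
  have "\<exists>c\<in>(\<lambda>j. [real j * u]) ` {..<k}. l2dist x c \<le> u / 2" if "x \<in> line_config u k" for x
    using that
  proof (cases rule: line_config_cases)
    case 1
    then have "l2dist x [real 0 * u] \<le> u / 2" using \<open>0 < u\<close> by (simp add: l2dist_singleton)
    then show ?thesis using \<open>1 \<le> k\<close> by (intro bexI[of _ "[real 0 * u]"]) auto
  next
    case (2 j)
    then show ?thesis using \<open>0 < u\<close> by (force simp: l2dist_singleton)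
  qed
  then show "opt_radius (line_config u k) k \<le> u / 2"
    using \<open>finite (line_config u k)\<close> \<open>0 < u\<close>
    by (intro opt_radius_le[where C = "(\<lambda>j. [real j * u]) ` {..<k}"])
       (auto simp: line_config_def card_image inj_on_def)
qed

theorem corollary2:
  fixes eps :: real and T B :: nat
  assumes "eps > 0" and "T \<ge> 1" and "B \<ge> T"
  defines "k \<equiv> 5 * (B div T) + 5"
  shows "\<exists>(d::nat) (X::point set).
           finite X \<and> X \<noteq> {} \<and> (\<forall>x\<in>X. length x = d) \<and>
           opt_radius X k > 0 \<and>
           (\<forall>\<alpha>::real. \<alpha> > 1 - eps * opt_radius X k \<longrightarrow>
              (\<forall>pol. valid_policy X T B pol \<longrightarrow>
                 (\<exists>A. uvp_instance X T eps A \<and> concave_instance X T A \<and>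
                      measure_pmf.expectation (alg_output B pol A) (\<lambda>x. A x T)
                        < \<alpha> * (MAX x\<in>X. A x T))))"
proof -
  define u where "u = 1 / (eps * real T)"
  have "0 < u" using assms by (simp add: u_def)
  define X where "X = line_config u k"
  have "1 \<le> k" by (simp add: k_def)
  note radius = opt_radius_line_config[OF \<open>0 < u\<close> \<open>1 \<le> k\<close>, folded X_def]
  have "real (card (inner_points u k)) = 5 * real (B div T) + 4"
    using card_inner_points[OF \<open>0 < u\<close>] by (simp add: k_def)
  then have card_inner: "1 + real B / real T \<le> real (card (inner_points u k)) / 2"
    using real_divide_less_div_plus_1[of B T] by linarith
  have radius_bound: "1 - 1 / (2 * real T) \<le> 1 - eps * opt_radius X k"
    using mult_left_mono[OF radius(2), of eps] \<open>eps > 0\<close> by (simp add: u_def)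
  have "finite X" by (simp add: X_def line_config_def)
  have "inner_points u k \<subseteq> X" by (simp add: X_def inner_points_subset)
  have isolated: "1 / (eps * real T) \<le> l2dist y s" if "s \<in> inner_points u k" "y \<in> X" "y \<noteq> s" for s y
    using inner_points_isolated[OF \<open>0 < u\<close> that[unfolded X_def]] by (simp add: u_def)
  show ?thesis
  proof (intro exI[of _ 1] exI[of _ X] conjI allI impI)
    fix \<alpha> pol assume \<alpha>: "1 - eps * opt_radius X k < \<alpha>" and valid: "valid_policy X T B pol"
    obtain A where "uvp_instance X T eps A" "concave_instance X T A" "(MAX x\<in>X. A x T) = 1"
      and "measure_pmf.expectation (alg_output B pol A) (\<lambda>x. A x T) \<le> 1 - 1 / (2 * real T)"
      using exists_hard_instance[OF \<open>eps > 0\<close> \<open>T \<ge> 1\<close> \<open>finite X\<close> valid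
          \<open>inner_points u k \<subseteq> X\<close> card_inner isolated]
      by blast
    then show "\<exists>A. uvp_instance X T eps A \<and> concave_instance X T A \<and>
        measure_pmf.expectation (alg_output B pol A) (\<lambda>x. A x T) < \<alpha> * (MAX x\<in>X. A x T)"
      using \<alpha> radius_bound by fastforce
  qed (use radius(1) in \<open>auto simp: X_def line_config_def\<close>)
qed

end
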